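(* Fix a feature dimension $d$ and a finite label set $\mathcal{Y}$. There exist functions $f^{(1)}_{\text{agg}}, f^{(2)}_{\text{agg}}, \ldots$ and $f_{\text{pred}}$ such that the following holds. For every $\varepsilon > 0$, every connected graph $G = (V, E, \boldsymbol{X})$ with node features $\boldsymbol{X} \in \mathbb{R}^{n \times d}$, every nonempty set of labeled nodes $V_{\text{train}} \subset V$ with labels $\boldsymbol{Y}_{\text{train}} \in \mathcal{Y}^{V_{\text{train}}}$, and every test node $v \in V \setminus V_{\text{train}}$, there exists $L \in \mathbb{Z}_+$ such that for every $l \ge L$ the message passing GNN $(f^{(1)}_{\text{agg}}, \ldots, f^{(l)}_{\text{agg}}, f_{\text{pred}})$ with labels as features (LaF) outputs $\hat{\boldsymbol{y}}_v$ satisfying $$\left\| \hat{\boldsymbol{y}}_v - \hat{\boldsymbol{y}}^{\text{LP}}_{v} \right\|_1 \le \varepsilon,$$ where $\hat{\boldsymbol{y}}^{\text{LP}}_{v}$ is the output of label propagation at $v$.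
   Context: A graph is $G=(V,E,\boldsymbol{X})$ with nodes $V=\{1,\dots,n\}$, edge set $E$ (undirected), node features $\boldsymbol{X}=[\boldsymbol{x}_1,\dots,\boldsymbol{x}_n]^\top\in\mathbb{R}^{n\times d}$; $\mathcal{N}(v)$ is the set of neighbors of $v$ and $\deg(v)=|\mathcal{N}(v)|$. For a label $c \in \mathcal{Y}$, $\boldsymbol{y}_v\in\mathbb{R}^{\mathcal{Y}}$ denotes the one-hot encoding of the label of a labeled node $v$. A message passing GNN $(f^{(1)}_{\text{agg}},\dots,f^{(l)}_{\text{agg}},f_{\text{pred}})$ computes $\boldsymbol{h}^{(k)}_v = f^{(k)}_{\text{agg}}(\boldsymbol{h}^{(k-1)}_v, \{\!\{\boldsymbol{h}^{(k-1)}_u : u\in\mathcal{N}(v)\}\!\})$ for $k=1,\dots,l$ and all $v\in V$ (the second argument is a multiset), and outputs $\hat{\boldsymbol{y}}_v=f_{\text{pred}}(\boldsymbol{h}^{(l)}_v)$. With labels as features (LaF), the initialization is $\boldsymbol{h}^{(0)}_v=[\boldsymbol{x}_v;\tilde{\boldsymbol{y}}_v]\in\mathbb{R}^{d+1+|\mathcal{Y}|}$, where $\tilde{\boldsymbol{y}}_v=[1;\boldsymbol{y}_v]$ if $v\in V_{\text{train}}$ and $\tilde{\boldsymbol{y}}_v=\mathbf{0}_{1+|\mathcal{Y}|}$ otherwise ($[\cdot;\cdot]$ is concatenation). Label propagation: for a test node $v$, run a simple random walk from $v$ (each step moves to a uniformly random neighbor of the current node); $\hat{\boldsymbol{y}}^{\text{LP}}_{v}\in\mathbb{R}^{\mathcal{Y}}$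 has $i$-th entry equal to the probability that the first node of $V_{\text{train}}$ hit by the walk has label $i$. *)

theory Defs
  imports Complex_Main "HOL-Library.Multiset"
begin

definition simple_graph_on :: "nat set \<Rightarrow> (nat \<Rightarrow> nat \<Rightarrow> bool) \<Rightarrow> bool" where
  "simple_graph_on V E \<longleftrightarrow> finite V \<and> (\<forall>a b. E a b \<longrightarrow> a \<in> V \<and> b \<in> V)
     \<and> (\<forall>a b. E a b \<longrightarrow> E b a) \<and> (\<forall>a. \<not> E a a)"

definition connected_on :: "nat set \<Rightarrow> (nat \<Rightarrow> nat \<Rightarrow> bool) \<Rightarrow> bool" where
  "connected_on V E \<longleftrightarrow> (\<forall>a\<in>V. \<forall>b\<in>V. (a, b) \<in> {(x, y). E x y}\<^sup>*)"

definition nbrs :: "nat set \<Rightarrow> (nat \<Rightarrow> nat \<Rightarrow> bool) \<Rightarrow> nat \<Rightarrow> nat set" where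
  "nbrs V E v = {u \<in> V. E v u}"

definition degree :: "nat set \<Rightarrow> (nat \<Rightarrow> nat \<Rightarrow> bool) \<Rightarrow> nat \<Rightarrow> nat" where
  "degree V E v = card (nbrs V E v)"

text \<open>Labels: the finite label set is {0..<k}; one-hot encoding as a list of length k.\<close>

definition one_hot :: "nat \<Rightarrow> nat \<Rightarrow> real list" where
  "one_hot k c = map (\<lambda>i. if i = c then 1 else 0) [0..<k]"

definition laf_label :: "nat set \<Rightarrow> (nat \<Rightarrow> nat) \<Rightarrow> nat \<Rightarrow> nat \<Rightarrow> real list" where
  "laf_label Vt Y k v = (if v \<in> Vt then 1 # one_hot k (Y v) else replicate (Suc k) 0)"

primrec laf_hidden :: "(nat \<Rightarrow> real list \<Rightarrow> real list multiset \<Rightarrow> real list) \<Rightarrow> nat set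
    \<Rightarrow> (nat \<Rightarrow> nat \<Rightarrow> bool) \<Rightarrow> (nat \<Rightarrow> real list) \<Rightarrow> nat set \<Rightarrow> (nat \<Rightarrow> nat) \<Rightarrow> nat
    \<Rightarrow> nat \<Rightarrow> nat \<Rightarrow> real list" where
  "laf_hidden fagg V E X Vt Y k 0 v = X v @ laf_label Vt Y k v"
| "laf_hidden fagg V E X Vt Y k (Suc j) v =
     fagg (Suc j) (laf_hidden fagg V E X Vt Y k j v)
       (image_mset (\<lambda>u. laf_hidden fagg V E X Vt Y k j u) (mset_set (nbrs V E v)))"

text \<open>The event "the first training node hit by the simple random walk
  from v has label i" is the disjoint union over the hitting time t of the events
  "the walk u_0 = v, ..., u_t avoids Vt at times < t, and u_t is in Vt with label i".\<close>

definition first_hit_walks :: "nat set \<Rightarrow> (nat \<Rightarrow> nat \<Rightarrow> bool) \<Rightarrow> nat set \<Rightarrow> (nat \<Rightarrow> nat)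
    \<Rightarrow> nat \<Rightarrow> nat \<Rightarrow> nat \<Rightarrow> nat list set" where
  "first_hit_walks V E Vt Y v i t = {ws. length ws = Suc t \<and> ws ! 0 = v
      \<and> (\<forall>j<t. ws ! Suc j \<in> nbrs V E (ws ! j) \<and> ws ! j \<notin> Vt)
      \<and> ws ! t \<in> Vt \<and> Y (ws ! t) = i}"

definition walk_prob :: "nat set \<Rightarrow> (nat \<Rightarrow> nat \<Rightarrow> bool) \<Rightarrow> nat list \<Rightarrow> real" where
  "walk_prob V E ws = (\<Prod>j<length ws - 1. 1 / real (degree V E (ws ! j)))"

definition label_prop :: "nat set \<Rightarrow> (nat \<Rightarrow> nat \<Rightarrow> bool) \<Rightarrow> nat set \<Rightarrow> (nat \<Rightarrow> nat)
    \<Rightarrow> nat \<Rightarrow> nat \<Rightarrow> real" where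
  "label_prop V E Vt Y v i =
     (\<Sum>t. \<Sum>ws\<in>first_hit_walks V E Vt Y v i t. walk_prob V E ws)"

end

theory Submission
  imports Defs
begin

(* Label propagation satisfies first-step analysis: a training node reports its own label, any
   other node the mean over its neighbours.  A GNN performs one such step per layer by freezing
   the hidden state of training nodes (recognised by the LaF indicator coordinate) and replacing
   the label block of every other node by the neighbour mean.  After l layers it thus outputs
   exactly the probability that the walk from v first hits V_train within l steps, at a node with
   label i.  These truncated hitting probabilities are the partial sums of the series defining
   label propagation, which converges because they are bounded by 1. *)

definition first_hit_prob ::
    "nat set \<Rightarrow> (nat \<Rightarrow> nat \<Rightarrow> bool) \<Rightarrow> nat set \<Rightarrow> (nat \<Rightarrow> nat) \<Rightarrow> nat \<Rightarrow> nat \<Rightarrow> nat \<Rightarrow> real" where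
  "first_hit_prob V E Vt Y u i t = (\<Sum>ws\<in>first_hit_walks V E Vt Y u i t. walk_prob V E ws)"

definition label_prop_trunc ::
    "nat set \<Rightarrow> (nat \<Rightarrow> nat \<Rightarrow> bool) \<Rightarrow> nat set \<Rightarrow> (nat \<Rightarrow> nat) \<Rightarrow> nat \<Rightarrow> nat \<Rightarrow> nat \<Rightarrow> real" where
  "label_prop_trunc V E Vt Y u i l = (\<Sum>t\<le>l. first_hit_prob V E Vt Y u i t)"

lemma finite_first_hit_walks:
  assumes "finite V"
  shows "finite (first_hit_walks V E Vt Y u i t)"
proof (rule finite_subset)
  show "first_hit_walks V E Vt Y u i t \<subseteq> {ws. set ws \<subseteq> insert u V \<and> length ws = Suc t}"
  proof
    fix ws assume ws: "ws \<in> first_hit_walks V E Vt Y u i t"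
    have "ws ! j \<in> insert u V" if "j < Suc t" for j
    proof (cases j)
      case 0
      then show ?thesis using ws by (simp add: first_hit_walks_def)
    next
      case (Suc j')
      then have "ws ! j \<in> nbrs V E (ws ! j')"
        using ws that by (simp add: first_hit_walks_def)
      then show ?thesis by (simp add: nbrs_def)
    qed
    moreover have "length ws = Suc t"
      using ws by (simp add: first_hit_walks_def)
    ultimately show "ws \<in> {ws. set ws \<subseteq> insert u V \<and> length ws = Suc t}"
      by (metis (mono_tags, lifting) in_set_conv_nth mem_Collect_eq subsetI)
  qed
  show "finite {ws. set ws \<subseteq> insert u V \<and> length ws = Suc t}"
    using assms by (intro finite_lists_length_eq) auto
qed

lemma first_hit_walks_0:
  "first_hit_walks V E Vt Y u i 0 = (if u \<in> Vt \<and> Y u = i then {[u]} else {})"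
proof -
  have "ws = [u]" if "length ws = Suc 0" "ws ! 0 = u" for ws
    using that by (cases ws) auto
  then show ?thesis by (auto simp: first_hit_walks_def)
qed

lemma first_hit_walks_Suc_train:
  "u \<in> Vt \<Longrightarrow> first_hit_walks V E Vt Y u i (Suc t) = {}"
  by (auto simp: first_hit_walks_def)

lemma first_hit_walks_Suc:
  assumes "u \<notin> Vt"
  shows "first_hit_walks V E Vt Y u i (Suc t) =
    (\<Union>w\<in>nbrs V E u. (#) u ` first_hit_walks V E Vt Y w i t)"
proof (intro equalityI subsetI)
  fix ws assume ws: "ws \<in> first_hit_walks V E Vt Y u i (Suc t)"
  then obtain xs where xs: "ws = u # xs" "length xs = Suc t"
    by (cases ws) (auto simp: first_hit_walks_def)
  have step: "xs ! j \<in> nbrs V E (ws ! j) \<and> ws ! j \<notin> Vt" if "j < Suc t" for j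
    using ws that xs by (auto simp: first_hit_walks_def)
  have "xs \<in> first_hit_walks V E Vt Y (xs ! 0) i t"
    using ws xs step[of "Suc _"] by (auto simp: first_hit_walks_def)
  moreover have "xs ! 0 \<in> nbrs V E u"
    using step[of 0] xs by simp
  ultimately show "ws \<in> (\<Union>w\<in>nbrs V E u. (#) u ` first_hit_walks V E Vt Y w i t)"
    using xs by blast
next
  fix ws assume "ws \<in> (\<Union>w\<in>nbrs V E u. (#) u ` first_hit_walks V E Vt Y w i t)"
  then obtain w xs where w: "w \<in> nbrs V E u" and xs: "xs \<in> first_hit_walks V E Vt Y w i t"
    and ws: "ws = u # xs" by blast
  have "ws ! Suc j \<in> nbrs V E (ws ! j) \<and> ws ! j \<notin> Vt" if "j < Suc t" for j
    using that w xs assms ws by (cases j) (auto simp: first_hit_walks_def)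
  then show "ws \<in> first_hit_walks V E Vt Y u i (Suc t)"
    using ws xs by (auto simp: first_hit_walks_def)
qed

lemma walk_prob_Cons:
  "xs \<noteq> [] \<Longrightarrow> walk_prob V E (u # xs) = walk_prob V E xs / real (degree V E u)"
  by (cases xs) (simp_all add: walk_prob_def prod.lessThan_Suc_shift del: prod.lessThan_Suc)

lemma first_hit_prob_nonneg: "first_hit_prob V E Vt Y u i t \<ge> 0"
  unfolding first_hit_prob_def walk_prob_def by (intro sum_nonneg prod_nonneg) auto

lemma first_hit_prob_0:
  "first_hit_prob V E Vt Y u i 0 = (if u \<in> Vt \<and> Y u = i then 1 else 0)"
  by (simp add: first_hit_prob_def first_hit_walks_0 walk_prob_def)

lemma first_hit_prob_Suc_train:
  "u \<in> Vt \<Longrightarrow> first_hit_prob V E Vt Y u i (Suc t) = 0"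
  by (simp add: first_hit_prob_def first_hit_walks_Suc_train)

lemma first_hit_prob_Suc:
  assumes "finite V" "u \<notin> Vt"
  shows "first_hit_prob V E Vt Y u i (Suc t) =
    (\<Sum>w\<in>nbrs V E u. first_hit_prob V E Vt Y w i t) / real (degree V E u)"
proof -
  have "first_hit_prob V E Vt Y u i (Suc t) =
      (\<Sum>w\<in>nbrs V E u. \<Sum>ws\<in>(#) u ` first_hit_walks V E Vt Y w i t. walk_prob V E ws)"
    unfolding first_hit_prob_def first_hit_walks_Suc[OF assms(2)]
    using assms(1)
    by (intro sum.UNION_disjoint ballI finite_imageI finite_first_hit_walks)
      (auto simp: nbrs_def first_hit_walks_def)
  also have "\<dots> = (\<Sum>w\<in>nbrs V E u. \<Sum>ws\<in>first_hit_walks V E Vt Y w i t. walk_prob V E (u # ws))"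
    by (simp add: sum.reindex)
  also have "\<dots> = (\<Sum>w\<in>nbrs V E u. \<Sum>ws\<in>first_hit_walks V E Vt Y w i t.
      walk_prob V E ws / real (degree V E u))"
    by (intro sum.cong refl walk_prob_Cons) (auto simp: first_hit_walks_def)
  finally show ?thesis
    by (simp add: first_hit_prob_def sum_divide_distrib)
qed

lemma label_prop_trunc_train:
  "u \<in> Vt \<Longrightarrow> label_prop_trunc V E Vt Y u i l = (if Y u = i then 1 else 0)"
  by (induction l) (simp_all add: label_prop_trunc_def first_hit_prob_0 first_hit_prob_Suc_train)

lemma label_prop_trunc_0:
  "u \<notin> Vt \<Longrightarrow> label_prop_trunc V E Vt Y u i 0 = 0"
  by (simp add: label_prop_trunc_def first_hit_prob_0)

lemma label_prop_trunc_Suc: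
  assumes "finite V" "u \<notin> Vt"
  shows "label_prop_trunc V E Vt Y u i (Suc l) =
    (\<Sum>w\<in>nbrs V E u. label_prop_trunc V E Vt Y w i l) / real (degree V E u)"
  unfolding label_prop_trunc_def sum.atMost_Suc_shift
  using assms by (simp add: first_hit_prob_0 first_hit_prob_Suc sum.swap[of _ "nbrs V E u"]
      sum_divide_distrib[symmetric])

lemma label_prop_trunc_le_1:
  assumes "finite V"
  shows "label_prop_trunc V E Vt Y u i l \<le> 1"
proof (induction l arbitrary: u)
  case 0
  then show ?case by (simp add: label_prop_trunc_def first_hit_prob_0)
next
  case (Suc l)
  show ?case
  proof (cases "u \<in> Vt")
    case True
    then show ?thesis by (simp add: label_prop_trunc_train)
  next
    case False
    have "(\<Sum>w\<in>nbrs V E u. label_prop_trunc V E Vt Y w i l) \<le> real (degree V E u)"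
      using sum_mono[of "nbrs V E u" "\<lambda>w. label_prop_trunc V E Vt Y w i l" "\<lambda>_. 1"] Suc.IH
      by (simp add: degree_def)
    then show ?thesis
      using label_prop_trunc_Suc[OF assms False] by (auto simp: divide_le_eq_1)
  qed
qed

lemma label_prop_trunc_tendsto:
  assumes "finite V"
  shows "(\<lambda>l. label_prop_trunc V E Vt Y u i l) \<longlonglongrightarrow> label_prop V E Vt Y u i"
proof -
  have "summable (first_hit_prob V E Vt Y u i)"
    using label_prop_trunc_le_1[OF assms]
    by (intro bounded_imp_summable[where B = 1]) (auto simp: first_hit_prob_nonneg label_prop_trunc_def)
  moreover have "label_prop V E Vt Y u i = (\<Sum>t. first_hit_prob V E Vt Y u i t)"
    by (simp add: label_prop_def first_hit_prob_def)
  ultimately show ?thesis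
    using summable_LIMSEQ' by (simp add: label_prop_trunc_def)
qed

(* Hidden states have the layout  X u @ flag # label block,  the flag h ! d marking training nodes. *)
definition lp_agg :: "nat \<Rightarrow> nat \<Rightarrow> real list \<Rightarrow> real list multiset \<Rightarrow> real list" where
  "lp_agg d k h M = (if h ! d = 1 then h else take (Suc d) h @
     map (\<lambda>i. sum_mset (image_mset (\<lambda>g. g ! (Suc d + i)) M) / real (size M)) [0..<k])"

definition lp_pred :: "nat \<Rightarrow> real list \<Rightarrow> real list" where
  "lp_pred d h = drop (Suc d) h"

lemma laf_hidden_lp_agg:
  assumes "finite V" "\<forall>u\<in>V. length (X u) = d" "u \<in> V"
  shows "laf_hidden (\<lambda>_. lp_agg d k) V E X Vt Y k l u =
    X u @ (if u \<in> Vt then 1 else 0) # map (\<lambda>i. label_prop_trunc V E Vt Y u i l) [0..<k]"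
  using assms(3)
proof (induction l arbitrary: u)
  case 0
  then show ?case
    using assms(2)
    by (auto simp: laf_label_def one_hot_def map_replicate_const label_prop_trunc_train
        label_prop_trunc_0)
next
  case (Suc l)
  let ?H = "laf_hidden (\<lambda>_. lp_agg d k) V E X Vt Y k"
  have d: "length (X u) = d"
    using Suc.prems assms(2) by blast
  show ?case
  proof (cases "u \<in> Vt")
    case True
    then show ?thesis
      using Suc d by (simp add: lp_agg_def nth_append label_prop_trunc_train)
  next
    case False
    have "?H l u = X u @ 0 # map (\<lambda>i. label_prop_trunc V E Vt Y u i l) [0..<k]"
      using Suc False by simp
    then have "?H (Suc l) u = X u @ 0 # map (\<lambda>i. (\<Sum>w\<in>nbrs V E u. ?H l w ! (Suc d + i))
        / real (degree V E u)) [0..<k]"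
      using d by (simp add: lp_agg_def nth_append multiset.map_comp o_def degree_def
          sum_unfold_sum_mset[symmetric])
    moreover have "(\<Sum>w\<in>nbrs V E u. ?H l w ! (Suc d + i))
        = (\<Sum>w\<in>nbrs V E u. label_prop_trunc V E Vt Y w i l)" if "i < k" for i
      using Suc.IH assms(2) that by (intro sum.cong) (auto simp: nbrs_def nth_append)
    ultimately show ?thesis
      using False assms(1) by (simp add: label_prop_trunc_Suc)
  qed
qed

theorem theorem1:
  fixes d k :: nat
  shows "\<exists>(fagg :: nat \<Rightarrow> real list \<Rightarrow> real list multiset \<Rightarrow> real list)
           (fpred :: real list \<Rightarrow> real list).
    \<forall>\<epsilon>::real. \<epsilon> > 0 \<longrightarrow>
    (\<forall>(n::nat) (E :: nat \<Rightarrow> nat \<Rightarrow> bool) (X :: nat \<Rightarrow> real list) (Vt :: nat set)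
        (Y :: nat \<Rightarrow> nat) (v::nat).
      simple_graph_on {1..n} E \<and> connected_on {1..n} E
      \<and> (\<forall>u\<in>{1..n}. length (X u) = d)
      \<and> Vt \<subseteq> {1..n} \<and> Vt \<noteq> {} \<and> (\<forall>u\<in>Vt. Y u < k)
      \<and> v \<in> {1..n} - Vt
      \<longrightarrow> (\<exists>L::nat. L \<ge> 1 \<and> (\<forall>l\<ge>L.
            length (fpred (laf_hidden fagg {1..n} E X Vt Y k l v)) = k
            \<and> (\<Sum>i<k. \<bar>fpred (laf_hidden fagg {1..n} E X Vt Y k l v) ! i
                       - label_prop {1..n} E Vt Y v i\<bar>) \<le> \<epsilon>)))"
proof (intro exI[of _ "\<lambda>_. lp_agg d k"] exI[of _ "lp_pred d"] allI impI)
  fix \<epsilon> :: real and n E and X :: "nat \<Rightarrow> real list" and Vt Y v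
  assume "\<epsilon> > 0" and hyps: "simple_graph_on {1..n} E \<and> connected_on {1..n} E
      \<and> (\<forall>u\<in>{1..n}. length (X u) = d)
      \<and> Vt \<subseteq> {1..n} \<and> Vt \<noteq> {} \<and> (\<forall>u\<in>Vt. Y u < k)
      \<and> v \<in> {1..n} - Vt"
  let ?out = "\<lambda>l. lp_pred d (laf_hidden (\<lambda>_. lp_agg d k) {1..n} E X Vt Y k l v)"
  let ?trunc = "label_prop_trunc {1..n} E Vt Y v" and ?lp = "label_prop {1..n} E Vt Y v"
  have out: "?out l = map (\<lambda>i. ?trunc i l) [0..<k]" for l
    using hyps laf_hidden_lp_agg[of "{1..n}" X d v] by (simp add: lp_pred_def)
  then have error_eq: "(\<Sum>i<k. \<bar>?out l ! i - ?lp i\<bar>) = (\<Sum>i<k. \<bar>?trunc i l - ?lp i\<bar>)" for l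
    by (intro sum.cong) simp_all
  have "(\<lambda>l. \<Sum>i<k. \<bar>?trunc i l - ?lp i\<bar>) \<longlonglongrightarrow> (\<Sum>i<k. \<bar>?lp i - ?lp i\<bar>)"
    by (intro tendsto_intros label_prop_trunc_tendsto) simp
  then have "\<forall>\<^sub>F l in sequentially. (\<Sum>i<k. \<bar>?trunc i l - ?lp i\<bar>) < \<epsilon>"
    using \<open>\<epsilon> > 0\<close> by (simp add: order_tendstoD(2))
  then obtain L where "\<forall>l\<ge>L. (\<Sum>i<k. \<bar>?trunc i l - ?lp i\<bar>) < \<epsilon>"
    by (auto simp: eventually_sequentially)
  then show "\<exists>L\<ge>1. \<forall>l\<ge>L. length (?out l) = k \<and> (\<Sum>i<k. \<bar>?out l ! i - ?lp i\<bar>) \<le> \<epsilon>"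
    unfolding error_eq out by (intro exI[of _ "max L 1"]) auto
qed

end
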